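(* Let $D=(N,A)$, $\mathcal{K}$, $\{D^k\}_{k\in\mathcal{K}}$ be an instance of SND-RR, let $\mathcal{A}=\{\mathcal{A}_v\}_{v\in N}$ be a valid arc partition for it, and let $G=G(D,\mathcal{A})$ be the auxiliary flat network. Then for each commodity $k\in\mathcal{K}$, the subgraph $G^k$ has the same number of nodes and the same number of arcs as $D^k$.
   Context: An instance of SND-RR has a directed graph $D=(N,A)$, a set $\mathcal{K}$ of commodities each with origin $o_k\in N$ and destination $d_k\in N$, and for each $k$ a subgraph $D^k=(N^k,A^k)\subseteq D$. Standing assumption: for each $k$, $\delta^+_{D^k}(d_k)=\emptyset$, and $\delta^+_{D^k}(v)\neq\emptyset$ for every $v\in N^k\setminus\{d_k\}$ (where $\delta^+_H(v)$ denotes the arcs of $H$ leaving $v$). A partition $\mathcal{A}=\{\mathcal{A}_v\}_{v\in N}$ is valid if for each $v\in N$, $\mathcal{A}_v=\{A_1,\dots,A_r\}$ is a partition of $\delta^+_D(v)$, and for each $k\in\mathcal{K}$ there is $A_i\in\mathcal{A}_v$ with $\delta^+_{D^k}(v)\subseteq A_i$. For each $v\in N$ let $\mathcal{V}(v)=\{v^0,v^1,\dots,v^{|\mathcal{A}_v|}\}$: a copy $v^i$ for each part $A_i\in\mathcal{A}_v$ plus a terminal copy $v^0$. The auxiliary flat network $G=G(D,\mathcal{A})=(V,E)$ has $V=\bigcup_{v\in N}\mathcal{V}(v)$ and $E=\{v^iw^j: vw\in A_i\in\mathcal{A}_v,\ w^j\in\mathcal{V}(w)\}$. For $v\in N$ and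 $A_i\in\mathcal{A}_v$ let $\mathcal{K}(A_i)=\{k\in\mathcal{K}:\emptyset\neq\delta^+_{D^k}(v)\subseteq A_i\}$. For $k\in\mathcal{K}$, $G^k=(V^k,E^k)$ where $V^k=\{v^i: v\in N^k, A_i\in\mathcal{A}_v, k\in\mathcal{K}(A_i)\}\cup\{d_k^0\}$ and $E^k=\{v^iw^j: vw\in A^k, v^i\in V^k, w^j\in V^k\}$. *)

theory Defs
  imports Main "HOL-Library.Disjoint_Sets"
begin

text \<open>Digraphs are given by a node set and an arc set of ordered pairs (v,w).
  A commodity k has origin orig k, destination dest k and routing subgraph
  D^k = (Nk k, Ak k).\<close>

definition out_arcs :: "('a \<times> 'a) set \<Rightarrow> 'a \<Rightarrow> ('a \<times> 'a) set" where
  "out_arcs H v = {e \<in> H. fst e = v}"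

definition snd_rr_instance ::
  "'a set \<Rightarrow> ('a \<times> 'a) set \<Rightarrow> 'k set \<Rightarrow> ('k \<Rightarrow> 'a) \<Rightarrow> ('k \<Rightarrow> 'a)
   \<Rightarrow> ('k \<Rightarrow> 'a set) \<Rightarrow> ('k \<Rightarrow> ('a \<times> 'a) set) \<Rightarrow> bool" where
  "snd_rr_instance N A K orig dest Nk Ak \<longleftrightarrow>
     finite N \<and> A \<subseteq> N \<times> N \<and>
     (\<forall>k\<in>K. orig k \<in> Nk k \<and> dest k \<in> Nk k \<and> Nk k \<subseteq> N \<and> Ak k \<subseteq> A \<and>
        Ak k \<subseteq> Nk k \<times> Nk k \<and>
        out_arcs (Ak k) (dest k) = {} \<and>
        (\<forall>v \<in> Nk k - {dest k}. out_arcs (Ak k) v \<noteq> {}))"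

definition valid_partition ::
  "'a set \<Rightarrow> ('a \<times> 'a) set \<Rightarrow> 'k set \<Rightarrow> ('k \<Rightarrow> ('a \<times> 'a) set)
   \<Rightarrow> ('a \<Rightarrow> ('a \<times> 'a) set set) \<Rightarrow> bool" where
  "valid_partition N A K Ak P \<longleftrightarrow>
     (\<forall>v\<in>N. partition_on (out_arcs A v) (P v) \<and>
        (\<forall>k\<in>K. out_arcs (Ak k) v \<noteq> {} \<longrightarrow> (\<exists>S\<in>P v. out_arcs (Ak k) v \<subseteq> S)))"

text \<open>Copies of v: (v, None) is the terminal copy v^0, (v, Some S) the copy for part S.\<close>
definition G_nodes :: "'a set \<Rightarrow> ('a \<Rightarrow> ('a \<times> 'a) set set) \<Rightarrow> ('a \<times> ('a \<times> 'a) set option) set" where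
  "G_nodes N P = {(v, None) | v. v \<in> N} \<union> {(v, Some S) | v S. v \<in> N \<and> S \<in> P v}"

definition G_arcs :: "'a set \<Rightarrow> ('a \<Rightarrow> ('a \<times> 'a) set set)
   \<Rightarrow> (('a \<times> ('a \<times> 'a) set option) \<times> ('a \<times> ('a \<times> 'a) set option)) set" where
  "G_arcs N P = {((v, Some S), (w, c)) | v S w c.
      v \<in> N \<and> S \<in> P v \<and> (v, w) \<in> S \<and> (w, c) \<in> G_nodes N P}"

definition K_part :: "'k set \<Rightarrow> ('k \<Rightarrow> ('a \<times> 'a) set) \<Rightarrow> 'a \<Rightarrow> ('a \<times> 'a) set \<Rightarrow> 'k set" where
  "K_part K Ak v S = {k \<in> K. out_arcs (Ak k) v \<noteq> {} \<and> out_arcs (Ak k) v \<subseteq> S}"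

definition Gk_nodes :: "'k set \<Rightarrow> ('k \<Rightarrow> 'a) \<Rightarrow> ('k \<Rightarrow> 'a set) \<Rightarrow> ('k \<Rightarrow> ('a \<times> 'a) set)
   \<Rightarrow> ('a \<Rightarrow> ('a \<times> 'a) set set) \<Rightarrow> 'k \<Rightarrow> ('a \<times> ('a \<times> 'a) set option) set" where
  "Gk_nodes K dest Nk Ak P k =
     {(v, Some S) | v S. v \<in> Nk k \<and> S \<in> P v \<and> k \<in> K_part K Ak v S} \<union> {(dest k, None)}"

definition Gk_arcs :: "'a set \<Rightarrow> 'k set \<Rightarrow> ('k \<Rightarrow> 'a) \<Rightarrow> ('k \<Rightarrow> 'a set) \<Rightarrow> ('k \<Rightarrow> ('a \<times> 'a) set)
   \<Rightarrow> ('a \<Rightarrow> ('a \<times> 'a) set set) \<Rightarrow> 'k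
   \<Rightarrow> (('a \<times> ('a \<times> 'a) set option) \<times> ('a \<times> ('a \<times> 'a) set option)) set" where
  "Gk_arcs N K dest Nk Ak P k =
     {(x, y) \<in> G_arcs N P. (fst x, fst y) \<in> Ak k \<and>
        x \<in> Gk_nodes K dest Nk Ak P k \<and> y \<in> Gk_nodes K dest Nk Ak P k}"

end

theory Submission
  imports Defs
begin

text \<open>Projecting a copy v^i to v maps G^k bijectively onto D^k. Every non-destination
  node v of D^k has non-empty out-arcs, which by validity lie in some part of the partition
  at v, and by disjointness of the parts in exactly one; so v has exactly one copy in G^k,
  while d_k, having no out-arcs, keeps only its terminal copy. Since every arc of G^k
  joins copies of the endpoints of an arc of D^k, the projection is then also a bijection
  on arcs.\<close>

lemma disjoint_unique_superset:
  assumes "disjoint F" "S \<in> F" "T \<in> F" "X \<noteq> {}" "X \<subseteq> S" "X \<subseteq> T"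
  shows "S = T"
  using assms disjointD by blast

lemma mem_Gk_nodes:
  "x \<in> Gk_nodes K dest Nk Ak P k \<longleftrightarrow>
     x = (dest k, None) \<or> (\<exists>v S. x = (v, Some S) \<and> v \<in> Nk k \<and> S \<in> P v \<and> k \<in> K_part K Ak v S)"
  unfolding Gk_nodes_def by blast

locale snd_rr_commodity =
  fixes N A K orig dest Nk Ak P k
  assumes snd_rr: "snd_rr_instance N A K orig dest Nk Ak"
    and valid: "valid_partition N A K Ak P"
    and commodity: "k \<in> K"
begin

abbreviation "Gk \<equiv> Gk_nodes K dest Nk Ak P k"

lemma
  shows Nk_subset: "Nk k \<subseteq> N"
    and dest_in_Nk: "dest k \<in> Nk k"
    and Ak_subset: "Ak k \<subseteq> Nk k \<times> Nk k"
    and out_arcs_dest: "out_arcs (Ak k) (dest k) = {}"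
    and out_arcs_nonempty: "v \<in> Nk k - {dest k} \<Longrightarrow> out_arcs (Ak k) v \<noteq> {}"
  using snd_rr commodity unfolding snd_rr_instance_def by auto

lemma copy_in_Gk_nodes:
  assumes "v \<in> Nk k" "v \<noteq> dest k"
  obtains S where "S \<in> P v" "out_arcs (Ak k) v \<subseteq> S" "(v, Some S) \<in> Gk"
proof -
  have "out_arcs (Ak k) v \<noteq> {}"
    using assms out_arcs_nonempty by blast
  moreover from this obtain S where "S \<in> P v" "out_arcs (Ak k) v \<subseteq> S"
    using valid commodity assms(1) Nk_subset unfolding valid_partition_def by blast
  ultimately show thesis
    using that assms(1) commodity by (auto simp: mem_Gk_nodes K_part_def)
qed

lemma Gk_nodes_copy_unique:
  assumes "(v, c) \<in> Gk" "(v, c') \<in> Gk"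
  shows "c = c'"
proof (cases "v = dest k")
  case True
  then show ?thesis
    using assms out_arcs_dest by (auto simp: mem_Gk_nodes K_part_def)
next
  case False
  then obtain S S' where "c = Some S" "c' = Some S'" "v \<in> Nk k" "S \<in> P v" "S' \<in> P v"
      "out_arcs (Ak k) v \<noteq> {}" "out_arcs (Ak k) v \<subseteq> S" "out_arcs (Ak k) v \<subseteq> S'"
    using assms by (auto simp: mem_Gk_nodes K_part_def)
  moreover have "disjoint (P v)"
    using valid \<open>v \<in> Nk k\<close> Nk_subset
    unfolding valid_partition_def partition_on_def by blast
  ultimately show ?thesis
    using disjoint_unique_superset by metis
qed

lemma Gk_nodes_subset_G_nodes: "Gk \<subseteq> G_nodes N P"
  using Nk_subset dest_in_Nk by (auto simp: mem_Gk_nodes G_nodes_def)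

lemma bij_betw_fst_Gk_nodes: "bij_betw fst Gk (Nk k)"
proof (rule bij_betw_imageI)
  show "inj_on fst Gk"
    by (rule inj_onI) (metis Gk_nodes_copy_unique prod.collapse)
  have "Nk k \<subseteq> fst ` Gk"
  proof
    fix v assume "v \<in> Nk k"
    then show "v \<in> fst ` Gk"
      by (cases "v = dest k") (force simp: mem_Gk_nodes, metis copy_in_Gk_nodes fst_conv imageI)
  qed
  then show "fst ` Gk = Nk k"
    using dest_in_Nk by (auto simp: mem_Gk_nodes)
qed

lemma bij_betw_Gk_arcs: "bij_betw (map_prod fst fst) (Gk_arcs N K dest Nk Ak P k) (Ak k)"
proof (rule bij_betw_imageI)
  have "inj_on (map_prod fst fst) (Gk \<times> Gk)"
    using bij_betw_fst_Gk_nodes by (simp add: map_prod_inj_on bij_betw_def)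
  then show "inj_on (map_prod fst fst) (Gk_arcs N K dest Nk Ak P k)"
    by (rule inj_on_subset) (auto simp: Gk_arcs_def)
  have "Ak k \<subseteq> map_prod fst fst ` Gk_arcs N K dest Nk Ak P k"
  proof
    fix e assume e: "e \<in> Ak k"
    then obtain v w where vw: "e = (v, w)" "v \<in> Nk k" "w \<in> Nk k"
      using Ak_subset by blast
    then have "e \<in> out_arcs (Ak k) v"
      using e by (simp add: out_arcs_def)
    then have "v \<noteq> dest k"
      using out_arcs_dest by auto
    obtain S where S: "S \<in> P v" "out_arcs (Ak k) v \<subseteq> S" "(v, Some S) \<in> Gk"
      using vw(2) \<open>v \<noteq> dest k\<close> by (rule copy_in_Gk_nodes)
    have "w \<in> fst ` Gk"
      using bij_betw_fst_Gk_nodes vw(3) by (simp add: bij_betw_def)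
    then obtain c where c: "(w, c) \<in> Gk"
      by force
    have "((v, Some S), (w, c)) \<in> G_arcs N P"
      using S c vw(2) \<open>e \<in> out_arcs (Ak k) v\<close> Nk_subset Gk_nodes_subset_G_nodes
      unfolding G_arcs_def vw(1) by blast
    then have "((v, Some S), (w, c)) \<in> Gk_arcs N K dest Nk Ak P k"
      using S c e vw by (simp add: Gk_arcs_def)
    then show "e \<in> map_prod fst fst ` Gk_arcs N K dest Nk Ak P k"
      using vw by force
  qed
  then show "map_prod fst fst ` Gk_arcs N K dest Nk Ak P k = Ak k"
    by (auto simp: Gk_arcs_def)
qed

end

theorem lemma1:
  assumes "snd_rr_instance N A K orig dest Nk Ak"
    and "valid_partition N A K Ak P"
    and "k \<in> K"
  shows "card (Gk_nodes K dest Nk Ak P k) = card (Nk k)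
       \<and> card (Gk_arcs N K dest Nk Ak P k) = card (Ak k)"
proof -
  interpret snd_rr_commodity N A K orig dest Nk Ak P k
    using assms by unfold_locales
  show ?thesis
    using bij_betw_same_card[OF bij_betw_fst_Gk_nodes] bij_betw_same_card[OF bij_betw_Gk_arcs]
    by simp
qed

end
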